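(* Let $R$ be an associative ring with identity and involution $*$, and let $a\in R^{\#}\cap R^{\dagger}$. Then $a\in R^{SEP}$ if and only if $a(a^{\#})^*a^{\dagger}$ and $a^{\dagger}a^2$ are left $a$-equivalent, i.e. $a\cdot a(a^{\#})^*a^{\dagger}=a\cdot a^{\dagger}a^2$.
   Context: An involution on $R$ is a map $x\mapsto x^*$ with $(x^* )^*=x$, $(x+y)^*=x^*+y^*$, $(xy)^*=y^*x^*$. An element $a$ is Moore–Penrose invertible if there is $b$ with $aba=a$, $bab=b$, $(ab)^*=ab$, $(ba)^*=ba$; such $b$ is unique, denoted $a^{\dagger}$, and $R^{\dagger}$ is the set of such $a$. An element $a$ is group invertible if there is $b$ with $aba=a$, $bab=b$, $ab=ba$; such $b$ is unique, denoted $a^{\#}$, and $R^{\#}$ is the set of such $a$. For $a\in R^{\#}\cap R^{\dagger}$, $a$ is SEP if $a^*=a^{\dagger}=a^{\#}$; $R^{SEP}$ denotes the set of SEP elements. For $x,b,c\in R$, $b$ and $c$ are left $x$-equivalent if $xb=xc$. *)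

theory Defs
  imports Main
begin

definition involution :: "('a::ring_1 \<Rightarrow> 'a) \<Rightarrow> bool" where
  "involution s \<longleftrightarrow> (\<forall>x. s (s x) = x) \<and> (\<forall>x y. s (x + y) = s x + s y)
                      \<and> (\<forall>x y. s (x * y) = s y * s x)"

definition is_mp_inverse :: "('a::ring_1 \<Rightarrow> 'a) \<Rightarrow> 'a \<Rightarrow> 'a \<Rightarrow> bool" where
  "is_mp_inverse s a b \<longleftrightarrow> a * b * a = a \<and> b * a * b = b \<and> s (a * b) = a * b \<and> s (b * a) = b * a"

definition mp_invertible :: "('a::ring_1 \<Rightarrow> 'a) \<Rightarrow> 'a \<Rightarrow> bool" where
  "mp_invertible s a \<longleftrightarrow> (\<exists>b. is_mp_inverse s a b)"

definition mp_inv :: "('a::ring_1 \<Rightarrow> 'a) \<Rightarrow> 'a \<Rightarrow> 'a" where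
  "mp_inv s a = (THE b. is_mp_inverse s a b)"

definition is_group_inverse :: "'a::ring_1 \<Rightarrow> 'a \<Rightarrow> bool" where
  "is_group_inverse a b \<longleftrightarrow> a * b * a = a \<and> b * a * b = b \<and> a * b = b * a"

definition group_invertible :: "'a::ring_1 \<Rightarrow> bool" where
  "group_invertible a \<longleftrightarrow> (\<exists>b. is_group_inverse a b)"

definition group_inv :: "'a::ring_1 \<Rightarrow> 'a" where
  "group_inv a = (THE b. is_group_inverse a b)"

definition SEP :: "('a::ring_1 \<Rightarrow> 'a) \<Rightarrow> 'a \<Rightarrow> bool" where
  "SEP s a \<longleftrightarrow> group_invertible a \<and> mp_invertible s a
              \<and> s a = mp_inv s a \<and> mp_inv s a = group_inv a"

definition left_equiv :: "'a::ring_1 \<Rightarrow> 'a \<Rightarrow> 'a \<Rightarrow> bool" where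
  "left_equiv x b c \<longleftrightarrow> x * b = x * c"

end

theory Submission
  imports Defs
begin

text \<open>Write \<open>x = a\<^sup>#\<close> and \<open>y = a\<^sup>\<dagger>\<close>. Since \<open>a y a\<^sup>2 = a\<^sup>2\<close> and \<open>x a\<^sup>2 = a\<close>,
  left \<open>a\<close>-equivalence means \<open>a x\<^sup>* y = a\<close>. This forces \<open>a y = x a = a x\<close>, so \<open>x\<close>
  satisfies the Penrose equations and \<open>y = x\<close>; then \<open>a y\<^sup>* y = a\<close> gives \<open>y\<^sup>* = a\<close>.
  Conversely, for SEP \<open>a\<close> we have \<open>x\<^sup>* = a\<close> and \<open>a x\<^sup>* y = a\<^sup>2 x = a\<close>.\<close>

lemma involution_involutive: "involution s \<Longrightarrow> s (s x) = x"
  by (simp add: involution_def)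

lemma involution_mult: "involution s \<Longrightarrow> s (x * y) = s y * s x"
  by (simp add: involution_def)

lemma is_group_inverse_unique:
  fixes a x x' :: "'a::ring_1"
  assumes "is_group_inverse a x" "is_group_inverse a x'"
  shows "x = x'"
proof -
  have x: "a * x * a = a" "x * a * x = x" "a * x = x * a"
    and x': "a * x' * a = a" "x' * a * x' = x'" "a * x' = x' * a"
    using assms by (auto simp: is_group_inverse_def)
  have ax: "a * x = a * x'"
  proof -
    have "a * x = (a * x' * a) * x" using x'(1) by simp
    also have "\<dots> = x' * a * (a * x)" using x'(3) by (metis mult.assoc)
    also have "\<dots> = x' * (a * x * a)" using x(3) by (metis mult.assoc)
    also have "\<dots> = a * x'" using x(1) x'(3) by simp
    finally show ?thesis .
  qed
  have "x = x * (a * x')" using x(2) ax by (simp add: mult.assoc)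
  also have "\<dots> = a * x * x'" using x(3) by (metis mult.assoc)
  also have "\<dots> = x' * a * x'" using ax x'(3) by simp
  also have "\<dots> = x'" using x'(2) .
  finally show ?thesis .
qed

lemma is_mp_inverse_unique:
  fixes a y y' :: "'a::ring_1"
  assumes s: "involution s" and "is_mp_inverse s a y" "is_mp_inverse s a y'"
  shows "y = y'"
proof -
  have y: "a * y * a = a" "y * a * y = y" "s (a * y) = a * y" "s (y * a) = y * a"
    and y': "a * y' * a = a" "y' * a * y' = y'" "s (a * y') = a * y'" "s (y' * a) = y' * a"
    using assms by (auto simp: is_mp_inverse_def)
  have ay: "a * y = a * y'"
  proof -
    have "(a * y') * (a * y) = a * y" using y'(1) by (simp add: mult.assoc[symmetric])
    then have "a * y = s ((a * y') * (a * y))" using y(3) by simp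
    also have "\<dots> = a * y * (a * y')" using y(3) y'(3) by (simp add: involution_mult[OF s])
    also have "\<dots> = a * y'" using y(1) by (simp add: mult.assoc[symmetric])
    finally show ?thesis .
  qed
  have ya: "y * a = y' * a"
  proof -
    have "(y * a) * (y' * a) = y * a" using y'(1) by (simp add: mult.assoc)
    then have "y * a = s ((y * a) * (y' * a))" using y(4) by simp
    also have "\<dots> = y' * a * (y * a)" using y(4) y'(4) by (simp add: involution_mult[OF s])
    also have "\<dots> = y' * a" using y(1) by (simp add: mult.assoc)
    finally show ?thesis .
  qed
  have "y = y * a * y" using y by simp
  also have "\<dots> = y' * a * y'" using ay ya by (simp add: mult.assoc)
  also have "\<dots> = y'" using y' by simp
  finally show ?thesis .
qed

lemma group_inv_is_group_inverse:
  "group_invertible a \<Longrightarrow> is_group_inverse a (group_inv a)"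
  unfolding group_invertible_def group_inv_def by (metis theI is_group_inverse_unique)

lemma mp_inv_is_mp_inverse:
  "involution s \<Longrightarrow> mp_invertible s a \<Longrightarrow> is_mp_inverse s a (mp_inv s a)"
  unfolding mp_invertible_def mp_inv_def by (metis theI is_mp_inverse_unique)

lemma is_mp_inverse_if_hermitian_group_inverse:
  "is_group_inverse a x \<Longrightarrow> s (a * x) = a * x \<Longrightarrow> is_mp_inverse s a x"
  unfolding is_group_inverse_def is_mp_inverse_def by metis

lemma left_equiv_inner_inverse_square_iff:
  fixes a x y w :: "'a::ring_1"
  assumes x: "is_group_inverse a x" and y: "a * y * a = a"
  shows "left_equiv a (a * w) (y * a ^ 2) \<longleftrightarrow> a * w = a"
proof -
  have "a * (y * a ^ 2) = a * a" using y by (simp add: power2_eq_square mult.assoc[symmetric])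
  moreover have "x * (a * a) = a" using x by (metis is_group_inverse_def mult.assoc)
  ultimately show ?thesis unfolding left_equiv_def by (metis mult.assoc)
qed

lemma mp_inverse_eq_group_inverse:
  fixes a x y :: "'a::ring_1"
  assumes s: "involution s" and gx: "is_group_inverse a x" and my: "is_mp_inverse s a y"
    and eq: "a * s x * y = a"
  shows "y = x"
proof -
  have x: "a * x * a = a" "a * x = x * a" using gx by (auto simp: is_group_inverse_def)
  have y: "y * a * y = y" "s (a * y) = a * y" using my by (auto simp: is_mp_inverse_def)
  have xa: "x * a * (s x * y) = x * a" using eq by (simp add: mult.assoc)
  have xaa: "x * a * a = a" using x by simp
  have "a * y = x * a * (s x * y) * a * y" using xa xaa by simp
  also have "\<dots> = x * a * (s x * (y * a * y))" by (simp add: mult.assoc)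
  also have "\<dots> = x * a" using xa y(1) by simp
  finally have "a * y = a * x" using x(2) by simp
  then have "s (a * x) = a * x" using y(2) by simp
  with gx have "is_mp_inverse s a x" by (rule is_mp_inverse_if_hermitian_group_inverse)
  with s my show ?thesis by (rule is_mp_inverse_unique)
qed

lemma adjoint_eq_mp_inverse_if_commuting:
  fixes a y :: "'a::ring_1"
  assumes s: "involution s" and my: "is_mp_inverse s a y" and comm: "a * y = y * a"
    and eq: "a * s y * y = a"
  shows "s a = y"
proof -
  have y: "a * y * a = a" "y * a * y = y" "s (y * a) = y * a"
    using my by (auto simp: is_mp_inverse_def)
  have "s y = s (y * (y * a))" using y(2) comm by (simp add: mult.assoc)
  also have "\<dots> = y * a * s y" using y(3) by (simp add: involution_mult[OF s])
  finally have ya_sy: "y * a * s y = s y" by simp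
  have "s y * y = y * a * s y * y" using ya_sy by simp
  also have "\<dots> = y * (a * s y * y)" by (simp add: mult.assoc)
  also have "\<dots> = y * a" using eq by simp
  finally have sy_y: "s y * y = y * a" .
  have "s y = s (y * a * y)" using y(2) by simp
  also have "\<dots> = s y * (y * a)" using y(3) by (simp add: involution_mult[OF s])
  also have "\<dots> = y * a * a" using sy_y by (simp add: mult.assoc[symmetric])
  also have "\<dots> = a" using y(1) comm by simp
  finally show ?thesis using involution_involutive[OF s] by metis
qed

theorem theorem5p1:
  fixes s :: "'a::ring_1 \<Rightarrow> 'a" and a :: 'a
  assumes "involution s"
    and "group_invertible a" and "mp_invertible s a"
  shows "SEP s a \<longleftrightarrow>
         left_equiv a (a * s (group_inv a) * mp_inv s a) (mp_inv s a * a ^ 2)"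
proof -
  define x y where "x = group_inv a" and "y = mp_inv s a"
  have gx: "is_group_inverse a x" using assms(2) by (simp add: x_def group_inv_is_group_inverse)
  have my: "is_mp_inverse s a y" using assms(1,3) by (simp add: y_def mp_inv_is_mp_inverse)
  have "left_equiv a (a * s x * y) (y * a ^ 2) \<longleftrightarrow> a * s x * y = a"
    using left_equiv_inner_inverse_square_iff[OF gx, of y "s x * y"] my
    by (simp add: is_mp_inverse_def mult.assoc)
  also have "\<dots> \<longleftrightarrow> y = x \<and> s a = y"
  proof
    assume eq: "a * s x * y = a"
    with assms(1) gx my have "y = x" by (rule mp_inverse_eq_group_inverse)
    moreover have "s a = y"
      using adjoint_eq_mp_inverse_if_commuting[OF assms(1) my] eq gx \<open>y = x\<close>
      by (simp add: is_group_inverse_def)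
    ultimately show "y = x \<and> s a = y" ..
  next
    assume "y = x \<and> s a = y"
    then have "a * s x * y = a * a * x" using involution_involutive[OF assms(1)] by metis
    then show "a * s x * y = a" using gx by (simp add: is_group_inverse_def mult.assoc)
  qed
  finally show ?thesis using assms(2,3) by (auto simp: SEP_def x_def y_def)
qed

end
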